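(* Let $s,y\in\mathbb{R}^n$ with $s^Ty>0$, and for $\tau\in[0,1]$ and $\alpha>0$ define $$\phi_\tau(\alpha)=\Big\|\tau\Big(\tfrac{1}{\alpha}s-y\Big)+(1-\tau)(s-\alpha y)\Big\|^2 .$$ Let $\alpha^{BB1}=\dfrac{s^Ts}{s^Ty}$ and $\alpha^{BB2}=\dfrac{s^Ty}{y^Ty}$. For each $\tau\in[0,1]$, the equation $\phi_\tau'(\alpha)=0$ has a unique root $\alpha(\tau)$ in $[\alpha^{BB2},\alpha^{BB1}]$. Then $\tau\mapsto\alpha(\tau)$ is monotone on $[0,1]$.
   Context: $\|\cdot\|$ is the Euclidean norm and $\phi_\tau'$ is the derivative of $\phi_\tau$ with respect to $\alpha$. *)

theory Defs
  imports "HOL-Analysis.Analysis"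
begin

definition phi :: "real^'n \<Rightarrow> real^'n \<Rightarrow> real \<Rightarrow> real \<Rightarrow> real" where
  "phi s y \<tau> \<alpha> = (norm (\<tau> *\<^sub>R ((1 / \<alpha>) *\<^sub>R s - y) + (1 - \<tau>) *\<^sub>R (s - \<alpha> *\<^sub>R y)))\<^sup>2"

definition alpha_BB1 :: "real^'n \<Rightarrow> real^'n \<Rightarrow> real" where
  "alpha_BB1 s y = (s \<bullet> s) / (s \<bullet> y)"

definition alpha_BB2 :: "real^'n \<Rightarrow> real^'n \<Rightarrow> real" where
  "alpha_BB2 s y = (s \<bullet> y) / (y \<bullet> y)"

definition alpha_root :: "real^'n \<Rightarrow> real^'n \<Rightarrow> real \<Rightarrow> real" where
  "alpha_root s y \<tau> = (THE a. a \<in> {alpha_BB2 s y..alpha_BB1 s y} \<and> deriv (phi s y \<tau>) a = 0)"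

end

theory Submission
  imports Defs
begin

text \<open>With \<open>a = s\<bullet>s\<close>, \<open>b = s\<bullet>y\<close>, \<open>c = y\<bullet>y\<close> one finds
  \<open>\<phi>\<^sub>\<tau>'(\<alpha>) = 2 (\<tau>/\<alpha> + 1 - \<tau>) h\<^sub>\<tau>(\<alpha>) / \<alpha>\<^sup>2\<close> with the cubic
  \<open>h\<^sub>\<tau>(\<alpha>) = (1 - \<tau>) \<alpha>\<^sup>2 (c\<alpha> - b) + \<tau> (b\<alpha> - a)\<close>, so on \<open>\<alpha> > 0\<close> the critical points of
  \<open>\<phi>\<^sub>\<tau>\<close> are the roots of \<open>h\<^sub>\<tau>\<close>. By Cauchy-Schwarz \<open>b/c \<le> a/b\<close>; on \<open>[b/c, a/b]\<close> both
  \<open>\<alpha>\<^sup>2 (c\<alpha> - b)\<close> and \<open>b\<alpha> - a\<close> are strictly increasing, the first is nonnegative and the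
  second nonpositive. Hence \<open>h\<^sub>\<tau>\<close> is strictly increasing there and changes sign, giving
  a unique root, and \<open>h\<^sub>\<tau>(\<alpha>)\<close> is antitone in \<open>\<tau>\<close>, so the root moves to the right as
  \<open>\<tau>\<close> grows.\<close>

definition phi_deriv_factor :: "real \<Rightarrow> real \<Rightarrow> real \<Rightarrow> real \<Rightarrow> real \<Rightarrow> real" where
  "phi_deriv_factor a b c t x = (1 - t) * x\<^sup>2 * (c * x - b) + t * (b * x - a)"

lemma phi_eq:
  "phi s y t x = (t / x + 1 - t)\<^sup>2 * (s \<bullet> s) - 2 * (t / x + 1 - t) * (t + (1 - t) * x) * (s \<bullet> y)
     + (t + (1 - t) * x)\<^sup>2 * (y \<bullet> y)"
proof -
  have "t *\<^sub>R ((1 / x) *\<^sub>R s - y) + (1 - t) *\<^sub>R (s - x *\<^sub>R y)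
      = (t / x + 1 - t) *\<^sub>R s - (t + (1 - t) * x) *\<^sub>R y"
    by (simp add: algebra_simps)
  then show ?thesis
    unfolding phi_def power2_norm_eq_inner
    by (simp add: inner_diff_left inner_diff_right inner_commute power2_eq_square)
qed

lemma phi_expansion_has_real_derivative:
  assumes "x > 0"
  shows "((\<lambda>z. (t / z + 1 - t)\<^sup>2 * a - 2 * (t / z + 1 - t) * (t + (1 - t) * z) * b
      + (t + (1 - t) * z)\<^sup>2 * c)
    has_real_derivative 2 * (t / x + 1 - t) * phi_deriv_factor a b c t x / x\<^sup>2) (at x)"
  using assms unfolding phi_deriv_factor_def
  by (auto intro!: derivative_eq_intros) (simp add: field_simps power2_eq_square)

lemma deriv_phi:
  assumes "x > 0"
  shows "deriv (phi s y t) x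
    = 2 * (t / x + 1 - t) * phi_deriv_factor (s \<bullet> s) (s \<bullet> y) (y \<bullet> y) t x / x\<^sup>2"
  unfolding phi_eq [abs_def]
  by (rule DERIV_imp_deriv [OF phi_expansion_has_real_derivative [OF assms]])

lemma deriv_phi_eq_0_iff:
  assumes "t \<in> {0..1}" and "x > 0"
  shows "deriv (phi s y t) x = 0 \<longleftrightarrow> phi_deriv_factor (s \<bullet> s) (s \<bullet> y) (y \<bullet> y) t x = 0"
proof -
  have "t / x + 1 - t > 0"
  proof (cases "t = 1")
    case False
    then have "1 - t > 0"
      using assms by simp
    moreover have "t / x \<ge> 0"
      using assms by simp
    ultimately show ?thesis
      by linarith
  qed (use assms in simp)
  then show ?thesis
    using assms by (simp add: deriv_phi)
qed

lemma strict_mono_on_phi_deriv_factor: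
  assumes "b > 0" and "c > 0" and "t \<in> {0..1}"
  shows "strict_mono_on {b / c..} (phi_deriv_factor a b c t)"
proof (rule strict_mono_onI)
  fix x1 x2 assume x1: "x1 \<in> {b / c..}" and "x2 \<in> {b / c..}" and "x1 < x2"
  have "x1 > 0"
    using x1 assms by (auto intro: less_le_trans [OF divide_pos_pos])
  moreover have "c * x1 - b \<ge> 0"
    using x1 \<open>c > 0\<close> by (simp add: field_simps)
  ultimately have cubic: "x1\<^sup>2 * (c * x1 - b) < x2\<^sup>2 * (c * x2 - b)"
    using \<open>x1 < x2\<close> \<open>c > 0\<close>
    by (intro mult_le_less_imp_less power_strict_mono) auto
  have linear: "b * x1 - a < b * x2 - a"
    using \<open>x1 < x2\<close> \<open>b > 0\<close> by simp
  have "(1 - t) * (x1\<^sup>2 * (c * x1 - b)) \<le> (1 - t) * (x2\<^sup>2 * (c * x2 - b))"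
    and "t * (b * x1 - a) \<le> t * (b * x2 - a)"
    using assms(3) cubic linear by (simp_all add: mult_left_mono)
  moreover have "(1 - t) * (x1\<^sup>2 * (c * x1 - b)) < (1 - t) * (x2\<^sup>2 * (c * x2 - b))
      \<or> t * (b * x1 - a) < t * (b * x2 - a)"
    using assms(3) cubic linear by (cases "t = 1") auto
  ultimately show "phi_deriv_factor a b c t x1 < phi_deriv_factor a b c t x2"
    by (simp add: phi_deriv_factor_def mult.assoc) linarith
qed

lemma phi_deriv_factor_antimono:
  assumes "b > 0" and "c > 0" and "x \<in> {b / c..a / b}" and "t1 \<le> t2"
  shows "phi_deriv_factor a b c t2 x \<le> phi_deriv_factor a b c t1 x"
proof -
  have "c * x - b \<ge> 0" and "b * x - a \<le> 0"
    using assms by (simp_all add: field_simps)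
  then have "x\<^sup>2 * (c * x - b) \<ge> 0" and "b * x - a \<le> 0"
    by simp_all
  then have "(t2 - t1) * ((b * x - a) - x\<^sup>2 * (c * x - b)) \<le> 0"
    using \<open>t1 \<le> t2\<close> by (simp add: mult_nonneg_nonpos)
  then show ?thesis
    by (simp add: phi_deriv_factor_def algebra_simps)
qed

lemma phi_deriv_factor_unique_root:
  assumes "b > 0" and "c > 0" and "b\<^sup>2 \<le> a * c" and "t \<in> {0..1}"
  shows "\<exists>!x. x \<in> {b / c..a / b} \<and> phi_deriv_factor a b c t x = 0"
proof -
  have "b / c \<le> a / b" and "b * (b / c) - a \<le> 0" and "c * (a / b) - b \<ge> 0"
    using assms by (simp_all add: field_simps power2_eq_square)
  then have "phi_deriv_factor a b c t (b / c) \<le> 0" and "phi_deriv_factor a b c t (a / b) \<ge> 0"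
    using assms by (simp_all add: phi_deriv_factor_def mult_nonneg_nonpos)
  moreover have "continuous_on {b / c..a / b} (phi_deriv_factor a b c t)"
    unfolding phi_deriv_factor_def by (intro continuous_intros)
  ultimately obtain x where x: "x \<in> {b / c..a / b}" "phi_deriv_factor a b c t x = 0"
    using IVT' [of "phi_deriv_factor a b c t" "b / c" 0 "a / b"] \<open>b / c \<le> a / b\<close> by auto
  have inj: "inj_on (phi_deriv_factor a b c t) {b / c..a / b}"
    using strict_mono_on_phi_deriv_factor [OF assms(1,2,4)]
    by (rule strict_mono_on_imp_inj_on [THEN inj_on_subset]) auto
  show ?thesis
  proof (rule ex1I [of _ x])
    fix x' assume "x' \<in> {b / c..a / b} \<and> phi_deriv_factor a b c t x' = 0"
    then show "x' = x"
      using inj_onD [OF inj, of x' x] x by simp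
  qed (use x in simp)
qed

lemma phi_deriv_factor_root_mono:
  assumes "b > 0" and "c > 0" and "t2 \<in> {0..1}" and "t1 \<le> t2"
    and "x1 \<in> {b / c..a / b}" and "x2 \<in> {b / c..a / b}"
    and "phi_deriv_factor a b c t1 x1 = 0" and "phi_deriv_factor a b c t2 x2 = 0"
  shows "x1 \<le> x2"
proof (rule ccontr)
  assume "\<not> x1 \<le> x2"
  then have "phi_deriv_factor a b c t2 x2 < phi_deriv_factor a b c t2 x1"
    using strict_mono_onD [OF strict_mono_on_phi_deriv_factor [OF assms(1-3)], of x2 x1] assms(5,6)
    by simp
  also have "\<dots> \<le> phi_deriv_factor a b c t1 x1"
    using phi_deriv_factor_antimono [OF assms(1,2,5,4)] .
  finally show False
    using assms(7,8) by simp
qed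

theorem proposition2:
  fixes s y :: "real^'n"
  assumes "s \<bullet> y > 0"
  shows "(\<forall>\<tau>\<in>{0..1}. \<exists>!a. a \<in> {alpha_BB2 s y..alpha_BB1 s y} \<and> deriv (phi s y \<tau>) a = 0)
         \<and> mono_on {0..1} (alpha_root s y)"
proof -
  define h where "h = phi_deriv_factor (s \<bullet> s) (s \<bullet> y) (y \<bullet> y)"
  have "y \<bullet> y > 0"
    using assms by auto
  have bounds: "alpha_BB2 s y = (s \<bullet> y) / (y \<bullet> y)" "alpha_BB1 s y = (s \<bullet> s) / (s \<bullet> y)"
    by (simp_all add: alpha_BB1_def alpha_BB2_def)
  have "alpha_BB2 s y > 0"
    using assms \<open>y \<bullet> y > 0\<close> by (simp add: bounds)
  have root_iff: "x \<in> {alpha_BB2 s y..alpha_BB1 s y} \<and> deriv (phi s y t) x = 0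
      \<longleftrightarrow> x \<in> {alpha_BB2 s y..alpha_BB1 s y} \<and> h t x = 0" if "t \<in> {0..1}" for t x
  proof (cases "x \<in> {alpha_BB2 s y..alpha_BB1 s y}")
    case True
    then have "x > 0"
      using \<open>alpha_BB2 s y > 0\<close> by simp
    then show ?thesis
      using deriv_phi_eq_0_iff [OF that \<open>x > 0\<close>, of s y] by (simp add: h_def)
  qed auto
  have unique: "\<exists>!x. x \<in> {alpha_BB2 s y..alpha_BB1 s y} \<and> h t x = 0" if "t \<in> {0..1}" for t
    using phi_deriv_factor_unique_root [OF assms \<open>y \<bullet> y > 0\<close> Cauchy_Schwarz_ineq that]
    unfolding bounds h_def .
  have root: "alpha_root s y t \<in> {alpha_BB2 s y..alpha_BB1 s y} \<and> h t (alpha_root s y t) = 0"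
    if "t \<in> {0..1}" for t
    unfolding alpha_root_def root_iff [OF that] using theI' [OF unique [OF that]] .
  have "mono_on {0..1} (alpha_root s y)"
  proof (rule mono_onI)
    fix t1 t2 :: real
    assume t: "t1 \<in> {0..1}" "t2 \<in> {0..1}" "t1 \<le> t2"
    show "alpha_root s y t1 \<le> alpha_root s y t2"
      using phi_deriv_factor_root_mono [OF assms \<open>y \<bullet> y > 0\<close> t(2,3)] root [OF t(1)] root [OF t(2)]
      unfolding bounds h_def by blast
  qed
  then show ?thesis
    using root_iff unique by simp
qed

end
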